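(* Consider a sequential team with a classical information structure such that additionally $\sigma(\omega_0)\subset\sigma(y^1)$. Suppose $\prod_k(\mathbb{Y}^k\times\mathbb{U}^k)$ is compact, the loss $c(\omega_0,\mathbf{u})$ is lower semi-continuous, and each measurement kernel $p_n$ is weakly continuous, i.e., $\int f(y^n)p_n(dy^n|\omega_0,u^1,\dots,u^{n-1})$ is continuous in $(\omega_0,u^1,\dots,u^{n-1})$ for every continuous and bounded $f$. Then there exists an optimal team policy which is deterministic.
   Context: Sequential team: DMs act in order $1,\dots,N$; DM $n$ observes $y^n=\eta^n(\omega,u^1,\dots,u^{n-1})\in\mathbb{Y}^n$ and chooses $u^n=\gamma^n(y^n)\in\mathbb{U}^n$ with $\gamma^n$ measurable; all spaces are standard Borel; $\omega_0$ is the cost-relevant exogenous variable and the cost is $J(\underline{\gamma})=E[c(\omega_0,\mathbf{u})]$ with $c\ge0$ measurable. The kernel $p_n$ is defined by $p_n(y^n\in\cdot|\omega_0,u^1,\dots,u^{n-1})=P(\eta^n(\omega,u^1,\dots,u^{n-1})\in\cdot\,|\,\omega_0,u^1,\dots,u^{n-1})$. The information structure is classical if $y^i$ contains all information available to DM $k$ for every $k<i$. An optimal policy attains $\inf_{\underline{\gamma}}J(\underline{\gamma})$. *)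

theory Defs
  imports "HOL-Probability.Probability"
begin

definition lsc_on :: "'a::topological_space set \<Rightarrow> ('a \<Rightarrow> real) \<Rightarrow> bool" where
  "lsc_on S f \<longleftrightarrow> (\<forall>a. openin (top_of_set S) {x \<in> S. a < f x})"

text \<open>Decision makers are indexed 0,...,N-1 (DM n+1 of the paper is DM n here).
  A tuple of earlier actions (u^0,...,u^(n-1)) is an extensional function in PiE {..<n} U.\<close>
primrec acts :: "(nat \<Rightarrow> 'o \<Rightarrow> (nat \<Rightarrow> 'u) \<Rightarrow> 'y) \<Rightarrow> (nat \<Rightarrow> 'y \<Rightarrow> 'u) \<Rightarrow> 'o \<Rightarrow> nat \<Rightarrow> (nat \<Rightarrow> 'u)" where
  "acts eta gamma omega 0 = (\<lambda>k. undefined)"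
| "acts eta gamma omega (Suc n) =
     (acts eta gamma omega n)(n := gamma n (eta n omega (acts eta gamma omega n)))"

definition team_policies :: "nat \<Rightarrow> (nat \<Rightarrow> 'y::topological_space set) \<Rightarrow> (nat \<Rightarrow> 'u::topological_space set)
    \<Rightarrow> (nat \<Rightarrow> 'y \<Rightarrow> 'u) set" where
  "team_policies N Y U = {gamma. \<forall>n<N. gamma n \<in> measurable (restrict_space borel (Y n)) borel
                                          \<and> (\<forall>y\<in>Y n. gamma n y \<in> U n)}"

definition team_cost :: "'o measure \<Rightarrow> ('o \<Rightarrow> 'w) \<Rightarrow> (nat \<Rightarrow> 'o \<Rightarrow> (nat \<Rightarrow> 'u) \<Rightarrow> 'y)
    \<Rightarrow> ('w \<Rightarrow> (nat \<Rightarrow> 'u) \<Rightarrow> real) \<Rightarrow> nat \<Rightarrow> (nat \<Rightarrow> 'y \<Rightarrow> 'u) \<Rightarrow> ennreal" where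
  "team_cost M w0 eta c N gamma = (\<integral>\<^sup>+ omega. ennreal (c (w0 omega) (acts eta gamma omega N)) \<partial>M)"

end

theory Submission
  imports Defs
begin

text \<open>Since \<open>\<omega>\<^sub>0\<close> is a Borel function of the first observation and, in a classical
  information structure, the first observation is a Borel function of every later one, every
  decision maker knows \<open>\<omega>\<^sub>0\<close>. The team can therefore play \<open>s(\<omega>\<^sub>0)\<close>, where \<open>s(w)\<close> minimises
  \<open>c(w, \<cdot>)\<close> over the compact set of action profiles; no policy does better pointwise.
  A minimiser exists by lower semicontinuity, and a Borel choice of it is obtained by
  shrinking dyadic balls around a dense sequence, greedily keeping a minimiser inside.\<close>

lemma dense_sequenceE:
  obtains d :: "nat \<Rightarrow> 'a::{metric_space, second_countable_topology}"
  where "\<And>x e. 0 < e \<Longrightarrow> \<exists>m. dist (d m) x < e"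
proof -
  obtain D :: "'a set" where "countable D" and D: "\<And>X. open X \<Longrightarrow> X \<noteq> {} \<Longrightarrow> \<exists>d\<in>D. d \<in> X"
    by (erule countable_dense_setE)
  have "\<exists>m. dist (from_nat_into D m) x < e" if e: "0 < e" for x e
  proof -
    obtain y where "y \<in> D" "y \<in> ball x e"
      using D[of "ball x e"] e by (metis centre_in_ball empty_iff open_ball)
    moreover obtain m where "from_nat_into D m = y"
      using from_nat_into_surj[OF \<open>countable D\<close> \<open>y \<in> D\<close>] by blast
    ultimately show ?thesis by (auto simp: dist_commute)
  qed
  then show ?thesis using that by blast
qed

lemma borel_measurable_factorization:
  fixes x :: "'p \<Rightarrow> 'a::polish_space" and y :: "'p \<Rightarrow> 'b::topological_space"
  assumes sub: "\<forall>A\<in>sets (borel :: 'a measure). \<exists>C\<in>sets (borel :: 'b measure).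
                   \<forall>p\<in>S. x p \<in> A \<longleftrightarrow> y p \<in> C"
  obtains h where "h \<in> borel_measurable borel" "\<And>p. p \<in> S \<Longrightarrow> h (y p) = x p"
proof -
  obtain d :: "nat \<Rightarrow> 'a" where d: "\<And>a e. 0 < e \<Longrightarrow> \<exists>m. dist (d m) a < e"
    using dense_sequenceE by blast
  have "\<forall>k m. \<exists>C. C \<in> sets (borel :: 'b measure) \<and> (\<forall>p\<in>S. x p \<in> ball (d m) ((1/2)^k) \<longleftrightarrow> y p \<in> C)"
    using sub by (meson borel_open open_ball)
  then obtain C where C: "\<And>k m. C k m \<in> sets borel"
    and C_iff: "\<And>k m p. p \<in> S \<Longrightarrow> x p \<in> ball (d m) ((1/2)^k) \<longleftrightarrow> y p \<in> C k m"
    by metis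
  define h_approx where "h_approx k b = d (LEAST m. b \<in> C k m)" for k b
  have h_approx_meas[measurable]: "h_approx k \<in> borel_measurable borel" for k
  proof -
    have [measurable]: "(\<lambda>b. LEAST m. b \<in> C k m) \<in> measurable borel (count_space UNIV)"
      using C by (intro measurable_Least pred_sets2[where N=borel] measurable_ident) auto
    show ?thesis unfolding h_approx_def
      by (rule measurable_compose_countable[where f="\<lambda>m b. d m"]) auto
  qed
  have h_approx_close: "dist (h_approx k (y p)) (x p) < (1/2)^k" if "p \<in> S" for k p
  proof -
    obtain m where "dist (d m) (x p) < (1/2)^k" using d[of "(1/2)^k"] by auto
    then have "y p \<in> C k m" using C_iff[OF that] by (auto simp: dist_commute)
    then have "y p \<in> C k (LEAST m. y p \<in> C k m)" by (rule LeastI)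
    then have "x p \<in> ball (d (LEAST m. y p \<in> C k m)) ((1/2)^k)" using C_iff[OF that] by blast
    then show ?thesis unfolding h_approx_def by (simp add: dist_commute)
  qed
  have h_approx_lim: "(\<lambda>k. h_approx k (y p)) \<longlonglongrightarrow> x p" if "p \<in> S" for p
  proof (rule tendsto_dist_iff[THEN iffD2])
    have "(\<lambda>k. (1/2::real)^k) \<longlonglongrightarrow> 0" by (rule LIMSEQ_realpow_zero) auto
    then show "(\<lambda>k. dist (h_approx k (y p)) (x p)) \<longlonglongrightarrow> 0"
      by (rule Lim_null_comparison[rotated])
         (auto intro!: always_eventually less_imp_le h_approx_close that)
  qed
  \<comment> \<open>Off the range of y the approximants need not converge; there the limit is forced to d 0.\<close>
  define h where "h b = lim (\<lambda>k. if Cauchy (\<lambda>k. h_approx k b) then h_approx k b else d 0)" for b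
  have "h \<in> borel_measurable borel"
  proof (rule borel_measurable_LIMSEQ_metric)
    fix b
    have "convergent (\<lambda>k. if Cauchy (\<lambda>k. h_approx k b) then h_approx k b else d 0)"
      by (cases "Cauchy (\<lambda>k. h_approx k b)") (auto simp: convergent_eq_Cauchy[symmetric] convergent_def)
    then show "(\<lambda>k. if Cauchy (\<lambda>k. h_approx k b) then h_approx k b else d 0) \<longlonglongrightarrow> h b"
      unfolding h_def by (rule convergent_LIMSEQ_iff[THEN iffD1])
  qed measurable
  moreover have "h (y p) = x p" if "p \<in> S" for p
    using h_approx_lim[OF that] LIMSEQ_imp_Cauchy[OF h_approx_lim[OF that]]
    unfolding h_def by (simp add: limI)
  ultimately show ?thesis using that by blast
qed

lemma borel_measurable_factorization_into:
  fixes x :: "'p \<Rightarrow> 'w::topological_space" and y :: "'p \<Rightarrow> 'b::topological_space"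
    and g :: "'w \<Rightarrow> 'a::polish_space"
  assumes sub: "\<forall>A\<in>sets (borel :: 'w measure). \<exists>C\<in>sets (borel :: 'b measure).
                   \<forall>p\<in>S. x p \<in> A \<longleftrightarrow> y p \<in> C"
    and g: "g \<in> borel_measurable borel" "\<And>w. g w \<in> V"
    and V: "V \<in> sets borel" "V \<noteq> {}"
  obtains h where "h \<in> borel_measurable borel" "\<And>b. h b \<in> V" "\<And>p. p \<in> S \<Longrightarrow> h (y p) = g (x p)"
proof -
  have sub_g: "\<forall>B\<in>sets (borel :: 'a measure). \<exists>C\<in>sets (borel :: 'b measure).
                 \<forall>p\<in>S. g (x p) \<in> B \<longleftrightarrow> y p \<in> C"
  proof
    fix B :: "'a set" assume "B \<in> sets borel"
    then have "g -` B \<in> sets borel" using measurable_sets[OF g(1)] by simp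
    then show "\<exists>C\<in>sets borel. \<forall>p\<in>S. g (x p) \<in> B \<longleftrightarrow> y p \<in> C"
      using sub by (metis vimage_eq)
  qed
  obtain h0 where h0: "h0 \<in> borel_measurable borel" "\<And>p. p \<in> S \<Longrightarrow> h0 (y p) = g (x p)"
    using borel_measurable_factorization[OF sub_g] by metis
  define h where "h b = (if h0 b \<in> V then h0 b else (SOME v. v \<in> V))" for b
  have "h \<in> borel_measurable borel"
    unfolding h_def using V(1) h0(1) by measurable
  moreover have "h b \<in> V" for b
    unfolding h_def using V(2) by (auto simp: some_in_eq)
  moreover have "h (y p) = g (x p)" if "p \<in> S" for p
    unfolding h_def using h0(2)[OF that] g(2) by simp
  ultimately show ?thesis using that by blast
qed

lemma lsc_onE:
  fixes f :: "'w::topological_space \<Rightarrow> 'k::topological_space \<Rightarrow> real"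
  assumes "lsc_on (UNIV \<times> K) (\<lambda>(w, x). f w x)"
  obtains T where "open T" "\<And>w x. x \<in> K \<Longrightarrow> (w, x) \<in> T \<longleftrightarrow> a < f w x"
proof -
  obtain T where "open T" and T: "{p \<in> UNIV \<times> K. a < (\<lambda>(w, x). f w x) p} = (UNIV \<times> K) \<inter> T"
    using assms unfolding lsc_on_def openin_open by blast
  have "(w, x) \<in> T \<longleftrightarrow> a < f w x" if "x \<in> K" for w x
    using T[THEN eqset_imp_iff, of "(w, x)"] that by auto
  then show ?thesis using that \<open>open T\<close> by blast
qed

lemma lsc_on_attains_Inf:
  fixes f :: "'w::topological_space \<Rightarrow> 'k::topological_space \<Rightarrow> real"
  assumes lsc: "lsc_on (UNIV \<times> K) (\<lambda>(w, x). f w x)"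
    and G: "compact G" "G \<noteq> {}" "G \<subseteq> K"
  obtains x where "x \<in> G" "\<And>y. y \<in> G \<Longrightarrow> f w x \<le> f w y" "Inf (f w ` G) = f w x"
proof -
  have "\<exists>x\<in>G. \<forall>y\<in>G. f w x \<le> f w y"
  proof (rule ccontr)
    assume "\<not> ?thesis"
    then have no_min: "\<forall>x\<in>G. \<exists>y\<in>G. f w y < f w x" by (auto simp: not_le)
    have "\<forall>a. \<exists>T. open T \<and> (\<forall>x\<in>K. (w, x) \<in> T \<longleftrightarrow> a < f w x)"
      using lsc_onE[OF lsc] by metis
    then obtain T where T: "\<And>a. open (T a)" "\<And>a x. x \<in> K \<Longrightarrow> (w, x) \<in> T a \<longleftrightarrow> a < f w x"
      by metis
    \<comment> \<open>Without a minimiser, the sets of points worse than some y form an open cover of G.\<close>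
    define worse where "worse y = (\<lambda>x. (w, x)) -` T (f w y)" for y
    have "open (worse y)" for y
      unfolding worse_def by (rule open_vimage) (auto intro!: continuous_intros T(1))
    moreover have "G \<subseteq> (\<Union>y\<in>G. worse y)"
    proof
      fix x assume "x \<in> G"
      then obtain y where "y \<in> G" "f w y < f w x" using no_min by blast
      then show "x \<in> (\<Union>y\<in>G. worse y)" using T(2) \<open>x \<in> G\<close> G(3) unfolding worse_def by blast
    qed
    ultimately obtain F where F: "F \<subseteq> G" "finite F" "G \<subseteq> (\<Union>y\<in>F. worse y)"
      using compactE_image[OF G(1)] by metis
    then have "F \<noteq> {}" using G(2) by auto
    then obtain x where x: "x \<in> F" "f w x = Min (f w ` F)"
      using Min_in[of "f w ` F"] F(2) by (metis finite_imageI image_iff image_is_empty)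
    then obtain y where "y \<in> F" "x \<in> worse y"
      using F by blast
    then have "f w y < f w x" using T(2) F(1) G(3) x(1) unfolding worse_def by blast
    moreover have "Min (f w ` F) \<le> f w y" using F(2) \<open>y \<in> F\<close> by simp
    ultimately show False using x(2) by simp
  qed
  then obtain x where "x \<in> G" "\<forall>y\<in>G. f w x \<le> f w y" by blast
  moreover then have "Inf (f w ` G) = f w x" by (intro cInf_eq_minimum) auto
  ultimately show ?thesis using that by blast
qed

lemma lsc_on_Inf_borel_measurable:
  fixes f :: "'w::topological_space \<Rightarrow> 'k::topological_space \<Rightarrow> real"
  assumes lsc: "lsc_on (UNIV \<times> K) (\<lambda>(w, x). f w x)"
    and G: "compact G" "G \<noteq> {}" "G \<subseteq> K"
  shows "(\<lambda>w. Inf (f w ` G)) \<in> borel_measurable borel"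
proof -
  have "open {w. a < Inf (f w ` G)}" for a
  proof (subst open_subopen, intro ballI)
    fix w assume "w \<in> {w. a < Inf (f w ` G)}"
    then have a: "a < Inf (f w ` G)" by simp
    obtain T where T: "open T" "\<And>w x. x \<in> K \<Longrightarrow> (w, x) \<in> T \<longleftrightarrow> a < f w x"
      using lsc_onE[OF lsc] by metis
    obtain x0 where "\<And>y. y \<in> G \<Longrightarrow> f w x0 \<le> f w y" "Inf (f w ` G) = f w x0"
      using lsc_on_attains_Inf[OF lsc G] by metis
    then have "{w} \<times> G \<subseteq> T" using a T(2) G(3) by force
    then obtain W where W: "w \<in> W" "open W" "W \<times> G \<subseteq> T"
      using Elementary_Topology.tube_lemma[OF G(1) T(1)] by blast
    \<comment> \<open>At every point of the tube the infimum is attained inside T, hence exceeds a.\<close>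
    have "W \<subseteq> {w. a < Inf (f w ` G)}"
    proof
      fix w' assume "w' \<in> W"
      obtain x where "x \<in> G" "Inf (f w' ` G) = f w' x"
        using lsc_on_attains_Inf[OF lsc G] by metis
      then show "w' \<in> {w. a < Inf (f w ` G)}" using W(3) \<open>w' \<in> W\<close> T(2) G(3) by auto
    qed
    then show "\<exists>T. open T \<and> w \<in> T \<and> T \<subseteq> {w. a < Inf (f w ` G)}" using W by blast
  qed
  then show ?thesis by (auto simp: borel_measurable_iff_greater)
qed

lemma lsc_on_argmin_meets_borel:
  fixes f :: "'w::topological_space \<Rightarrow> 'k::topological_space \<Rightarrow> real"
  assumes lsc: "lsc_on (UNIV \<times> K) (\<lambda>(w, x). f w x)"
    and K: "compact K" "K \<noteq> {}" and G: "compact G" "G \<subseteq> K"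
  shows "{w. \<exists>x\<in>G. \<forall>y\<in>K. f w x \<le> f w y} \<in> sets borel"
proof (cases "G = {}")
  case False
  have "(\<exists>x\<in>G. \<forall>y\<in>K. f w x \<le> f w y) \<longleftrightarrow> Inf (f w ` G) \<le> Inf (f w ` K)" for w
  proof -
    obtain xG where xG: "xG \<in> G" "\<And>y. y \<in> G \<Longrightarrow> f w xG \<le> f w y" "Inf (f w ` G) = f w xG"
      using lsc_on_attains_Inf[OF lsc G(1) False G(2)] by metis
    obtain xK where xK: "xK \<in> K" "\<And>y. y \<in> K \<Longrightarrow> f w xK \<le> f w y" "Inf (f w ` K) = f w xK"
      using lsc_on_attains_Inf[OF lsc K order_refl] by metis
    show ?thesis
      using xG xK G(2) by (metis order_trans subsetD)
  qed
  then have eq: "{w. \<exists>x\<in>G. \<forall>y\<in>K. f w x \<le> f w y} = {w. Inf (f w ` G) \<le> Inf (f w ` K)}"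
    by blast
  have [measurable]: "(\<lambda>w. Inf (f w ` G)) \<in> borel_measurable borel"
    "(\<lambda>w. Inf (f w ` K)) \<in> borel_measurable borel"
    using lsc_on_Inf_borel_measurable[OF lsc G(1) False G(2)]
      lsc_on_Inf_borel_measurable[OF lsc K order_refl] by auto
  show ?thesis unfolding eq by measurable
qed simp

lemma lsc_on_limit_of_minimisers:
  fixes f :: "'w::topological_space \<Rightarrow> 'k::topological_space \<Rightarrow> real" and z :: "nat \<Rightarrow> 'k"
  assumes lsc: "lsc_on (UNIV \<times> K) (\<lambda>(w, x). f w x)"
    and z: "z \<longlonglongrightarrow> x" "x \<in> K" "\<And>k. z k \<in> K" "\<And>k y. y \<in> K \<Longrightarrow> f w (z k) \<le> f w y"
    and "y \<in> K"
  shows "f w x \<le> f w y"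
proof (rule ccontr)
  assume "\<not> f w x \<le> f w y"
  obtain T where T: "open T" "\<And>w' x. x \<in> K \<Longrightarrow> (w', x) \<in> T \<longleftrightarrow> f w y < f w' x"
    using lsc_onE[OF lsc] by metis
  have "(w, x) \<in> T" using T(2) z(2) \<open>\<not> f w x \<le> f w y\<close> by auto
  moreover have "(\<lambda>k. (w, z k)) \<longlonglongrightarrow> (w, x)" using z(1) by (intro tendsto_Pair tendsto_const)
  ultimately have "eventually (\<lambda>k. (w, z k) \<in> T) sequentially"
    using T(1) by (simp add: topological_tendstoD)
  then obtain k where "(w, z k) \<in> T"
    unfolding eventually_sequentially by blast
  then show False using T(2) z(3,4) \<open>y \<in> K\<close> by (meson not_le)
qed

lemma dyadic_nested_convergent:
  fixes x z :: "nat \<Rightarrow> 'a::complete_space"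
  assumes close: "\<And>i n. i \<le> n \<Longrightarrow> dist (x i) (z n) \<le> (1/2)^i"
  obtains l where "x \<longlonglongrightarrow> l" "z \<longlonglongrightarrow> l"
proof -
  have "Cauchy x"
  proof (rule metric_CauchyI)
    fix e :: real assume "0 < e"
    then obtain M where M: "(1/2::real)^M < e/4" using real_arch_pow_inv[of "e/4" "1/2"] by auto
    have near_M: "dist (x n) (x M) \<le> 2 * (1/2)^M" if "M \<le> n" for n
    proof -
      have "dist (x n) (x M) \<le> dist (x n) (z n) + dist (x M) (z n)" by (rule dist_triangle2)
      also have "\<dots> \<le> (1/2)^n + (1/2)^M" using close[of n n] close[of M n] that by (intro add_mono) auto
      also have "\<dots> \<le> 2 * (1/2)^M" using that by (simp add: power_decreasing)
      finally show ?thesis .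
    qed
    show "\<exists>M. \<forall>m\<ge>M. \<forall>n\<ge>M. dist (x m) (x n) < e"
    proof (intro exI allI impI)
      fix m n assume "M \<le> m" "M \<le> n"
      have "dist (x m) (x n) \<le> dist (x m) (x M) + dist (x n) (x M)" by (rule dist_triangle2)
      also have "\<dots> < e" using near_M[OF \<open>M \<le> m\<close>] near_M[OF \<open>M \<le> n\<close>] M by simp
      finally show "dist (x m) (x n) < e" .
    qed
  qed
  then obtain l where x: "x \<longlonglongrightarrow> l" using Cauchy_convergent convergent_def by blast
  have "(\<lambda>k. dist (x k) l + (1/2)^k) \<longlonglongrightarrow> 0"
    using tendsto_add[OF tendsto_dist_iff[THEN iffD1, OF x] LIMSEQ_realpow_zero[of "1/2::real"]] by simp
  then have "(\<lambda>k. dist (z k) l) \<longlonglongrightarrow> 0"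
  proof (rule Lim_null_comparison[rotated], intro always_eventually allI)
    fix k
    have "dist (z k) l \<le> dist (x k) (z k) + dist (x k) l" by (rule dist_triangle3)
    then show "norm (dist (z k) l) \<le> dist (x k) l + (1/2)^k" using close[of k k] by simp
  qed
  then have "z \<longlonglongrightarrow> l" by (rule tendsto_dist_iff[THEN iffD2])
  with x show ?thesis using that by blast
qed

primrec least_choices :: "(nat list \<Rightarrow> 'a set) \<Rightarrow> nat \<Rightarrow> 'a \<Rightarrow> nat list" where
  "least_choices E 0 w = []"
| "least_choices E (Suc k) w = least_choices E k w @ [LEAST m. w \<in> E (least_choices E k w @ [m])]"

lemma length_least_choices[simp]: "length (least_choices E k w) = k"
  by (induction k) auto

lemma nth_least_choices: "i < k \<Longrightarrow> least_choices E k w ! i = least_choices E (Suc i) w ! i"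
proof (induction k)
  case (Suc k)
  then show ?case by (cases "i = k") (auto simp: nth_append less_Suc_eq)
qed simp

lemma least_choices_mem:
  assumes "w \<in> E []" and step: "\<And>l. w \<in> E l \<Longrightarrow> \<exists>m. w \<in> E (l @ [m])"
  shows "w \<in> E (least_choices E k w)"
proof (induction k)
  case (Suc k)
  then show ?case using step by (auto intro: LeastI_ex)
qed (use assms in simp)

lemma measurable_least_choices:
  assumes "\<And>l. E l \<in> sets M"
  shows "least_choices E k \<in> measurable M (count_space UNIV)"
proof (induction k)
  case (Suc k)
  have "(\<lambda>w. LEAST m. w \<in> E (l @ [m])) \<in> measurable M (count_space UNIV)" for l
    using assms by (intro measurable_Least pred_sets2[OF _ measurable_ident_sets]) auto
  then have "(\<lambda>w. l @ [LEAST m. w \<in> E (l @ [m])]) \<in> measurable M (count_space UNIV)" for l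
    by (rule measurable_compose) simp
  then show ?case
    by (simp only: least_choices.simps) (rule measurable_compose_countable[OF _ Suc.IH])
qed simp

lemma lsc_on_measurable_argmin:
  fixes f :: "'w::topological_space \<Rightarrow> 'k::polish_space \<Rightarrow> real"
  assumes lsc: "lsc_on (UNIV \<times> K) (\<lambda>(w, x). f w x)"
    and K: "compact K" "K \<noteq> {}"
  obtains s where "s \<in> borel_measurable borel" "\<And>w. s w \<in> K"
    "\<And>w y. y \<in> K \<Longrightarrow> f w (s w) \<le> f w y"
proof -
  obtain q :: "nat \<Rightarrow> 'k" where q: "\<And>x e. 0 < e \<Longrightarrow> \<exists>m. dist (q m) x < e"
    using dense_sequenceE by blast
  \<comment> \<open>Nested dyadic balls: the centre indices are chosen greedily so that a minimiser of f w
    survives in the intersection; E l is Borel, so every choice is measurable in w.\<close>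
  define B where "B l = K \<inter> (\<Inter>j<length l. cball (q (l!j)) ((1/2)^j))" for l
  define E where "E l = {w. \<exists>x\<in>B l. \<forall>y\<in>K. f w x \<le> f w y}" for l
  define centre where "centre k w = q (least_choices E (Suc k) w ! k)" for k w
  have B: "compact (B l)" "B l \<subseteq> K" for l
    unfolding B_def using K(1) by (auto intro!: compact_Int_closed closed_INT)
  have B_snoc: "B (l @ [m]) = B l \<inter> cball (q m) ((1/2)^length l)" for l m
    unfolding B_def by (auto simp: lessThan_Suc nth_append)
  have E_least_choices: "w \<in> E (least_choices E k w)" for k w
  proof (rule least_choices_mem)
    obtain x where "x \<in> K" "\<And>y. y \<in> K \<Longrightarrow> f w x \<le> f w y"
      using lsc_on_attains_Inf[OF lsc K order_refl] by metis
    moreover have "B [] = K" unfolding B_def by simp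
    ultimately show "w \<in> E []" unfolding E_def by blast
    fix l assume "w \<in> E l"
    then obtain x where x: "x \<in> B l" "\<forall>y\<in>K. f w x \<le> f w y" unfolding E_def by blast
    obtain m where "dist (q m) x < (1/2)^length l" using q[of "(1/2)^length l" x] by auto
    then have "x \<in> B (l @ [m])" using x(1) unfolding B_snoc by simp
    then show "\<exists>m. w \<in> E (l @ [m])" using x(2) unfolding E_def by blast
  qed
  have B_sub: "B l \<subseteq> cball (q (l!i)) ((1/2)^i)" if "i < length l" for l i
    unfolding B_def using that by blast
  have B_sub_ball: "B (least_choices E n w) \<subseteq> cball (centre i w) ((1/2)^i)" if "i < n" for i n w
    using B_sub[of i "least_choices E n w"] nth_least_choices[OF that, of E w] that
    unfolding centre_def by simp
  define s where "s w = lim (\<lambda>k. centre k w)" for w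
  have s: "(\<lambda>k. centre k w) \<longlonglongrightarrow> s w \<and> s w \<in> K \<and> (\<forall>y\<in>K. f w (s w) \<le> f w y)" for w
  proof -
    have "\<forall>k. \<exists>x. x \<in> B (least_choices E (Suc k) w) \<and> (\<forall>y\<in>K. f w x \<le> f w y)"
      using E_least_choices[of w] unfolding E_def by blast
    then obtain z where "\<forall>k. z k \<in> B (least_choices E (Suc k) w) \<and> (\<forall>y\<in>K. f w (z k) \<le> f w y)"
      by (rule choice[THEN exE])
    then have z: "\<And>k. z k \<in> B (least_choices E (Suc k) w)" "\<And>k y. y \<in> K \<Longrightarrow> f w (z k) \<le> f w y"
      by blast+
    have "dist (centre i w) (z n) \<le> (1/2)^i" if "i \<le> n" for i n
      using B_sub_ball[of i "Suc n" w] z(1)[of n] that by auto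
    then obtain l where l: "(\<lambda>k. centre k w) \<longlonglongrightarrow> l" "z \<longlonglongrightarrow> l"
      by (rule dyadic_nested_convergent)
    have "z k \<in> K" for k using z(1) B(2) by blast
    then have "l \<in> K" using closed_sequentially[OF compact_imp_closed[OF K(1)] _ l(2)] by blast
    moreover have "f w l \<le> f w y" if "y \<in> K" for y
      by (rule lsc_on_limit_of_minimisers[OF lsc l(2) \<open>l \<in> K\<close> \<open>\<And>k. z k \<in> K\<close> z(2) that])
    moreover have "s w = l" unfolding s_def using l(1) by (rule limI)
    ultimately show ?thesis using l(1) by blast
  qed
  have E_borel: "E l \<in> sets borel" for l
    unfolding E_def by (rule lsc_on_argmin_meets_borel[OF lsc K B])
  have "centre k \<in> borel_measurable borel" for k
  proof -
    have "(\<lambda>l. q (l ! k)) \<in> measurable (count_space UNIV) borel" by simp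
    then show ?thesis
      unfolding centre_def by (rule measurable_compose[OF measurable_least_choices[OF E_borel]])
  qed
  then have "s \<in> borel_measurable borel"
    using s by (blast intro: borel_measurable_LIMSEQ_metric)
  then show ?thesis using that s by blast
qed

lemma compact_PiE_iff:
  fixes S :: "'i \<Rightarrow> 'a::topological_space set"
  shows "compact (PiE I S) \<longleftrightarrow> PiE I S = {} \<or> (\<forall>i\<in>I. compact (S i))"
proof -
  have eq: "PiE I S = PiE UNIV (\<lambda>i. if i \<in> I then S i else {undefined})"
    by (auto simp: PiE_def extensional_def Pi_def split: if_splits)
  have "compact (PiE I S) \<longleftrightarrow> compactin (product_topology (\<lambda>i. euclidean) UNIV) (PiE I S)"
    by (simp add: euclidean_product_topology)
  also have "\<dots> \<longleftrightarrow> PiE I S = {} \<or> (\<forall>i\<in>I. compact (S i))"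
    unfolding eq compactin_PiE by (auto simp: compactin_euclidean_iff)
  finally show ?thesis .
qed

lemma compact_PiE_snd:
  fixes A :: "'i \<Rightarrow> 'a::topological_space set" and B :: "'i \<Rightarrow> 'b::topological_space set"
  assumes "compact (PiE I (\<lambda>k. A k \<times> B k))"
    and "\<And>k. k \<in> I \<Longrightarrow> A k \<noteq> {}" "\<And>k. k \<in> I \<Longrightarrow> B k \<noteq> {}"
  shows "compact (PiE I B)" "\<And>i. i \<in> I \<Longrightarrow> compact (B i)"
proof -
  have "compact (A i \<times> B i)" if "i \<in> I" for i
    using assms that by (auto simp: compact_PiE_iff PiE_eq_empty_iff)
  then show B: "compact (B i)" if "i \<in> I" for i
    using compact_continuous_image[OF continuous_on_snd[OF continuous_on_id], of "A i \<times> B i"] assms(2) that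
    by (simp add: snd_image_times)
  then show "compact (PiE I B)" by (simp add: compact_PiE_iff)
qed

lemma acts_eq_restrict:
  assumes "\<And>k. k < n \<Longrightarrow> gamma k (eta k omega (restrict v {..<k})) = v k"
  shows "acts eta gamma omega n = restrict v {..<n}"
  using assms
proof (induction n)
  case (Suc n)
  have IH: "acts eta gamma omega n = restrict v {..<n}"
    using Suc.prems by (intro Suc.IH) simp
  have "gamma n (eta n omega (restrict v {..<n})) = v n"
    using Suc.prems[of n] by blast
  then show ?case
    unfolding acts.simps IH by (auto simp: fun_eq_iff)
qed (simp add: fun_eq_iff)

lemma acts_in_PiE:
  assumes gamma: "gamma \<in> team_policies N Y U"
    and obs: "\<And>k u. k < n \<Longrightarrow> u \<in> PiE {..<k} U \<Longrightarrow> eta k omega u \<in> Y k" and "n \<le> N"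
  shows "acts eta gamma omega n \<in> PiE {..<n} U"
  using obs \<open>n \<le> N\<close>
proof (induction n)
  case (Suc n)
  then have IH: "acts eta gamma omega n \<in> PiE {..<n} U" by simp
  then have next_act: "gamma n (eta n omega (acts eta gamma omega n)) \<in> U n"
    using gamma Suc.prems unfolding team_policies_def by auto
  show ?case using PiE_fun_upd[OF next_act IH] by (simp only: acts.simps lessThan_Suc)
qed simp

lemma w0_measurable_wrt_observations:
  fixes eta :: "nat \<Rightarrow> 'o \<Rightarrow> (nat \<Rightarrow> 'u) \<Rightarrow> 'y::topological_space"
    and w0 :: "'o \<Rightarrow> 'w::topological_space"
  assumes classical: "\<forall>k i. k < i \<longrightarrow> i < N \<longrightarrow>
         (\<forall>B\<in>sets (borel :: 'y measure). \<exists>C\<in>sets (borel :: 'y measure).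
            \<forall>omega\<in>space M. \<forall>u\<in>PiE {..<i} U.
              (eta k omega (restrict u {..<k}) \<in> B \<longleftrightarrow> eta i omega u \<in> C))"
    and w0_y1: "\<forall>A\<in>sets (borel :: 'w measure). \<exists>B\<in>sets (borel :: 'y measure).
         {omega \<in> space M. w0 omega \<in> A} = {omega \<in> space M. eta 0 omega (\<lambda>k. undefined) \<in> B}"
    and "n < N"
  shows "\<forall>A\<in>sets (borel :: 'w measure). \<exists>C\<in>sets (borel :: 'y measure).
           \<forall>p\<in>space M \<times> PiE {..<n} U. w0 (fst p) \<in> A \<longleftrightarrow> eta n (fst p) (snd p) \<in> C"
proof
  fix A :: "'w set" assume "A \<in> sets borel"
  then obtain B where B: "B \<in> sets borel"
    and eq: "{omega \<in> space M. w0 omega \<in> A} = {omega \<in> space M. eta 0 omega (\<lambda>k. undefined) \<in> B}"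
    using w0_y1 by blast
  have w0_B: "w0 omega \<in> A \<longleftrightarrow> eta 0 omega (\<lambda>k. undefined) \<in> B" if "omega \<in> space M" for omega
    using eq[THEN eqset_imp_iff, of omega] that by simp
  have restrict_0: "restrict u {..<0} = (\<lambda>k. undefined)" for u :: "nat \<Rightarrow> 'u"
    by auto
  show "\<exists>C\<in>sets borel. \<forall>p\<in>space M \<times> PiE {..<n} U. w0 (fst p) \<in> A \<longleftrightarrow> eta n (fst p) (snd p) \<in> C"
  proof (cases "n = 0")
    case True
    then have "PiE {..<n} U = {\<lambda>k. undefined}" by (simp add: lessThan_0 PiE_empty_domain)
    then show ?thesis using True B w0_B by auto
  next
    case False
    then obtain C where "C \<in> sets borel"
      "\<forall>omega\<in>space M. \<forall>u\<in>PiE {..<n} U. eta 0 omega (\<lambda>k. undefined) \<in> B \<longleftrightarrow> eta n omega u \<in> C"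
      using classical[rule_format, of 0 n B] False \<open>n < N\<close> B unfolding restrict_0 by auto
    then show ?thesis using w0_B by auto
  qed
qed

lemma team_policy_realising:
  fixes s :: "'w::topological_space \<Rightarrow> nat \<Rightarrow> 'u::polish_space"
    and eta :: "nat \<Rightarrow> 'o \<Rightarrow> (nat \<Rightarrow> 'u) \<Rightarrow> 'y::topological_space"
    and Y :: "nat \<Rightarrow> 'y set"
  assumes U: "\<And>n. n < N \<Longrightarrow> U n \<in> sets borel" "\<And>n. n < N \<Longrightarrow> U n \<noteq> {}"
    and s: "s \<in> borel_measurable borel" "\<And>w. s w \<in> PiE {..<N} U"
    and obs: "\<And>n. n < N \<Longrightarrow> \<forall>A\<in>sets (borel :: 'w measure). \<exists>C\<in>sets (borel :: 'y measure).
           \<forall>p\<in>space M \<times> PiE {..<n} U. w0 (fst p) \<in> A \<longleftrightarrow> eta n (fst p) (snd p) \<in> C"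
  obtains gamma where "gamma \<in> team_policies N Y U"
    "\<And>omega. omega \<in> space M \<Longrightarrow> acts eta gamma omega N = s (w0 omega)"
proof -
  have "\<exists>h. n < N \<longrightarrow> h \<in> borel_measurable borel \<and> (\<forall>b. h b \<in> U n)
          \<and> (\<forall>p\<in>space M \<times> PiE {..<n} U. h (eta n (fst p) (snd p)) = s (w0 (fst p)) n)" for n
  proof (cases "n < N")
    case True
    have "(\<lambda>v. v n) \<in> borel_measurable (borel :: (nat \<Rightarrow> 'u) measure)"
      by (rule borel_measurable_continuous_onI) simp
    then have "(\<lambda>w. s w n) \<in> borel_measurable borel"
      by (rule measurable_compose[OF s(1)])
    moreover have "s w n \<in> U n" for w using s(2)[of w] True by auto
    ultimately show ?thesis
      using borel_measurable_factorization_into[OF obs[OF True], of "\<lambda>w. s w n"] U True by metis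
  qed simp
  then obtain gamma where gamma: "\<And>n. n < N \<Longrightarrow> gamma n \<in> borel_measurable borel"
    "\<And>n b. n < N \<Longrightarrow> gamma n b \<in> U n"
    "\<And>n omega u. n < N \<Longrightarrow> omega \<in> space M \<Longrightarrow> u \<in> PiE {..<n} U \<Longrightarrow>
       gamma n (eta n omega u) = s (w0 omega) n"
    by (metis fst_conv snd_conv mem_Times_iff)
  have "gamma \<in> team_policies N Y U"
    unfolding team_policies_def using gamma(1,2) by (auto intro: measurable_restrict_space1)
  moreover have "acts eta gamma omega N = s (w0 omega)" if "omega \<in> space M" for omega
  proof -
    have "restrict (s (w0 omega)) {..<k} \<in> PiE {..<k} U" if "k < N" for k
      using s(2)[of "w0 omega"] that by (auto simp: PiE_def Pi_def)
    then have "acts eta gamma omega N = restrict (s (w0 omega)) {..<N}"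
      using gamma(3) \<open>omega \<in> space M\<close> s(2) by (intro acts_eq_restrict) (auto simp: PiE_def Pi_def)
    then show ?thesis using s(2)[of "w0 omega"] by (simp add: PiE_def extensional_restrict)
  qed
  ultimately show ?thesis using that by blast
qed

lemma team_cost_pointwise_optimal:
  assumes gamma: "gamma \<in> team_policies N Y U"
    and acts_gamma: "\<And>omega. omega \<in> space M \<Longrightarrow> acts eta gamma omega N = s (w0 omega)"
    and s_min: "\<And>w u. u \<in> PiE {..<N} U \<Longrightarrow> c w (s w) \<le> c w u"
    and obs: "\<And>n omega u. n < N \<Longrightarrow> omega \<in> space M \<Longrightarrow> u \<in> PiE {..<n} U \<Longrightarrow>
                eta n omega u \<in> Y n"
  shows "team_cost M w0 eta c N gamma = (INF g\<in>team_policies N Y U. team_cost M w0 eta c N g)"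
proof (rule antisym)
  show "team_cost M w0 eta c N gamma \<le> (INF g\<in>team_policies N Y U. team_cost M w0 eta c N g)"
  proof (rule INF_greatest)
    fix g assume g: "g \<in> team_policies N Y U"
    show "team_cost M w0 eta c N gamma \<le> team_cost M w0 eta c N g"
      unfolding team_cost_def
    proof (rule nn_integral_mono)
      fix omega assume omega: "omega \<in> space M"
      have "acts eta g omega N \<in> PiE {..<N} U"
        using obs omega by (intro acts_in_PiE[OF g]) auto
      then show "ennreal (c (w0 omega) (acts eta gamma omega N)) \<le> ennreal (c (w0 omega) (acts eta g omega N))"
        using acts_gamma[OF omega] s_min by (simp add: ennreal_leI)
    qed
  qed
qed (rule INF_lower[OF gamma])

theorem mainTheorem5:
  fixes M :: "'o measure"
    and N :: nat
    and w0 :: "'o \<Rightarrow> 'w::polish_space"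
    and eta :: "nat \<Rightarrow> 'o \<Rightarrow> (nat \<Rightarrow> 'u::polish_space) \<Rightarrow> 'y::polish_space"
    and Y :: "nat \<Rightarrow> 'y set"
    and U :: "nat \<Rightarrow> 'u set"
    and c :: "'w \<Rightarrow> (nat \<Rightarrow> 'u) \<Rightarrow> real"
    and p :: "nat \<Rightarrow> 'w \<Rightarrow> (nat \<Rightarrow> 'u) \<Rightarrow> 'y measure"
  assumes P: "prob_space M"
    and N_pos: "0 < N"
    and w0_meas: "w0 \<in> measurable M borel"
    and U_ne: "\<forall>k<N. U k \<noteq> {}"
    and eta_meas: "\<forall>n<N. (\<lambda>(omega, u). eta n omega u)
         \<in> measurable (M \<Otimes>\<^sub>M (\<Pi>\<^sub>M k\<in>{..<n}. restrict_space borel (U k))) borel"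
    and eta_Y: "\<forall>n<N. \<forall>omega\<in>space M. \<forall>u\<in>PiE {..<n} U. eta n omega u \<in> Y n"
    \<comment> \<open>classical information structure: sigma(y^k) is contained in sigma(y^i) for k < i\<close>
    and classical: "\<forall>k i. k < i \<longrightarrow> i < N \<longrightarrow>
         (\<forall>B\<in>sets (borel :: 'y measure). \<exists>C\<in>sets (borel :: 'y measure).
            \<forall>omega\<in>space M. \<forall>u\<in>PiE {..<i} U.
              (eta k omega (restrict u {..<k}) \<in> B \<longleftrightarrow> eta i omega u \<in> C))"
    \<comment> \<open>sigma(omega_0) is contained in sigma(y^1)\<close>
    and w0_y1: "\<forall>A\<in>sets (borel :: 'w measure). \<exists>B\<in>sets (borel :: 'y measure).
         {omega \<in> space M. w0 omega \<in> A} = {omega \<in> space M. eta 0 omega (\<lambda>k. undefined) \<in> B}"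
    and compact_prod: "compact (PiE {..<N} (\<lambda>k. Y k \<times> U k))"
    and c_nonneg: "\<forall>w. \<forall>u\<in>PiE {..<N} U. 0 \<le> c w u"
    and c_meas: "(\<lambda>(w, u). c w u)
         \<in> borel_measurable (borel \<Otimes>\<^sub>M (\<Pi>\<^sub>M k\<in>{..<N}. restrict_space borel (U k)))"
    and c_lsc: "lsc_on (UNIV \<times> PiE {..<N} U) (\<lambda>(w, u). c w u)"
    and p_prob: "\<forall>n<N. \<forall>w. \<forall>u\<in>PiE {..<n} U.
         prob_space (p n w u) \<and> sets (p n w u) = sets borel \<and> measure (p n w u) (Y n) = 1"
    \<comment> \<open>p n (. | omega_0, u) is the conditional law of eta n (omega, u) given omega_0\<close>
    and p_cond: "\<forall>n<N. \<forall>u\<in>PiE {..<n} U. \<forall>A\<in>sets (borel :: 'w measure). \<forall>B\<in>sets (borel :: 'y measure).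
         measure M {omega \<in> space M. w0 omega \<in> A \<and> eta n omega u \<in> B}
           = (\<integral>omega. indicator A (w0 omega) * measure (p n (w0 omega) u) B \<partial>M)"
    and p_weak_cont: "\<forall>n<N. \<forall>f :: 'y \<Rightarrow> real. continuous_on UNIV f \<and> bounded (range f) \<longrightarrow>
         continuous_on (UNIV \<times> PiE {..<n} U) (\<lambda>(w, u). \<integral>y. f y \<partial>(p n w u))"
  shows "\<exists>gamma\<in>team_policies N Y U.
           team_cost M w0 eta c N gamma = (INF gamma'\<in>team_policies N Y U. team_cost M w0 eta c N gamma')"
proof -
  have U_ne': "\<And>k. k < N \<Longrightarrow> U k \<noteq> {}" using U_ne by blast
  have Y_ne: "Y k \<noteq> {}" if k: "k < N" for k
  proof -
    obtain omega where "omega \<in> space M" using prob_space.not_empty[OF P] by blast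
    moreover obtain u where "u \<in> PiE {..<k} U" using U_ne' k by (force simp: PiE_eq_empty_iff)
    ultimately show ?thesis using eta_Y k by blast
  qed
  have U_compact: "compact (PiE {..<N} U)" "\<And>n. n < N \<Longrightarrow> compact (U n)"
    using compact_PiE_snd[OF compact_prod] Y_ne U_ne' by auto
  have PiE_ne: "PiE {..<N} U \<noteq> {}" using U_ne' by (simp add: PiE_eq_empty_iff)
  obtain s where s: "s \<in> borel_measurable borel" "\<And>w. s w \<in> PiE {..<N} U"
    "\<And>w u. u \<in> PiE {..<N} U \<Longrightarrow> c w (s w) \<le> c w u"
    using lsc_on_measurable_argmin[OF c_lsc U_compact(1) PiE_ne] by blast
  have U_borel: "U n \<in> sets borel" if "n < N" for n
    using U_compact(2)[OF that] by (simp add: compact_imp_closed)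
  obtain gamma where gamma: "gamma \<in> team_policies N Y U"
    "\<And>omega. omega \<in> space M \<Longrightarrow> acts eta gamma omega N = s (w0 omega)"
    using team_policy_realising[where Y=Y, OF U_borel U_ne' s(1,2)
        w0_measurable_wrt_observations[OF classical w0_y1]]
    by metis
  have "team_cost M w0 eta c N gamma = (INF g\<in>team_policies N Y U. team_cost M w0 eta c N g)"
    using eta_Y by (intro team_cost_pointwise_optimal[where s=s and ?w0.0=w0 and c=c, OF gamma s(3)]) auto
  then show ?thesis using gamma(1) by blast
qed

end
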